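(* Consider an unlabeled tabletop rearrangement instance in which all objects have congruent disc footprints (uniform cylinders). Then its unlabeled dependency graph is a planar bipartite graph with maximum degree at most $5$.
   Context: A tabletop rearrangement instance consists of $n$ objects (generalized cylinders of equal height, so only their planar footprints matter) in a bounded planar workspace, a start arrangement and a goal arrangement. An arrangement assigns to each object a pose in $SE(2)$; it is feasible if no two placed footprints overlap, where two placed footprints overlap if their interiors intersect (for discs of radius $r$: centers at distance $<2r$). Both the start and goal arrangements are feasible. In the unlabeled setting objects are interchangeable. The unlabeled dependency graph is the bipartite graph with one start vertex for each start pose and one goal vertex for each goal pose, with an edge between a start vertex and a goal vertex iff a footprint placed at that start pose overlaps a footprint placed at that goal pose. *)

theory Defs
  imports "HOL-Analysis.Analysis"
begin

type_synonym point = "real^2"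

definition disc_overlap :: "real \<Rightarrow> point \<Rightarrow> point \<Rightarrow> bool" where
  "disc_overlap r c d \<longleftrightarrow> ball c r \<inter> ball d r \<noteq> {}"

definition feasible_arrangement :: "real \<Rightarrow> nat \<Rightarrow> (nat \<Rightarrow> point) \<Rightarrow> bool" where
  "feasible_arrangement r n c \<longleftrightarrow>
     (\<forall>i<n. \<forall>j<n. i \<noteq> j \<longrightarrow> \<not> disc_overlap r (c i) (c j))"

text \<open>Unlabeled dependency graph: start vertices Inl i, goal vertices Inr j (i, j < n).\<close>
definition dep_vertices :: "nat \<Rightarrow> (nat + nat) set" where
  "dep_vertices n = Inl ` {..<n} \<union> Inr ` {..<n}"

fun dep_edge :: "real \<Rightarrow> (nat \<Rightarrow> point) \<Rightarrow> (nat \<Rightarrow> point) \<Rightarrow> nat + nat \<Rightarrow> nat + nat \<Rightarrow> bool" where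
  "dep_edge r s g (Inl i) (Inr j) = disc_overlap r (s i) (g j)"
| "dep_edge r s g (Inr j) (Inl i) = disc_overlap r (s i) (g j)"
| "dep_edge r s g _ _ = False"

definition planar_graph :: "'v set \<Rightarrow> ('v \<Rightarrow> 'v \<Rightarrow> bool) \<Rightarrow> bool" where
  "planar_graph V E \<longleftrightarrow>
    (\<exists>(p :: 'v \<Rightarrow> point) (\<gamma> :: 'v \<Rightarrow> 'v \<Rightarrow> real \<Rightarrow> point).
       inj_on p V \<and>
       (\<forall>u\<in>V. \<forall>v\<in>V. E u v \<longrightarrow>
          arc (\<gamma> u v) \<and> pathstart (\<gamma> u v) = p u \<and> pathfinish (\<gamma> u v) = p v \<and>
          path_image (\<gamma> u v) \<inter> p ` V = {p u, p v}) \<and>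
       (\<forall>u\<in>V. \<forall>v\<in>V. \<forall>u'\<in>V. \<forall>v'\<in>V. E u v \<longrightarrow> E u' v' \<longrightarrow> {u, v} \<noteq> {u', v'} \<longrightarrow>
          path_image (\<gamma> u v) \<inter> path_image (\<gamma> u' v') \<subseteq> p ` ({u, v} \<inter> {u', v'})))"

definition max_degree_le :: "'v set \<Rightarrow> ('v \<Rightarrow> 'v \<Rightarrow> bool) \<Rightarrow> nat \<Rightarrow> bool" where
  "max_degree_le V E k \<longleftrightarrow> (\<forall>v\<in>V. card {w\<in>V. E v w} \<le> k)"

end

(*
  Discs of radius r overlap iff their centres are closer than 2r, and each feasible arrangement
  has its centres pairwise at least 2r apart.

  Degree: the centres overlapping a fixed disc lie in an open ball of radius 2r and are pairwise
  at least 2r apart, so by the law of cosines any two of them subtend an angle greater than pi/3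
  at the centre of the ball; hence there are at most five.

  Planarity: draw every edge as the straight segment between the two centres, after a tiny
  translation of the goal centres that makes them distinct from the start centres.  Segments
  s_i g_j and s_k g_l with i \<noteq> k and j \<noteq> l cannot meet, since a common point would give
  |s_i s_k| + |g_j g_l| \<le> |s_i g_j| + |s_k g_l| < 4r.  Two segments from a common centre that
  meet elsewhere lie on one ray, which would put their far ends closer than 2r.  No segment
  passes through a third centre, as every point of it is within 2r of both endpoints.
*)

theory Submission
  imports Defs
begin

lemma disc_overlap_iff_dist: "disc_overlap r c c' \<longleftrightarrow> dist c c' < 2 * r"
proof
  assume "disc_overlap r c c'"
  then obtain x where "dist c x < r" "dist c' x < r"
    unfolding disc_overlap_def by auto
  then show "dist c c' < 2 * r"
    using dist_triangle[of c c' x] by (simp add: dist_commute)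
next
  assume "dist c c' < 2 * r"
  then have "midpoint c c' \<in> ball c r \<inter> ball c' r"
    by (simp add: dist_midpoint)
  then show "disc_overlap r c c'"
    unfolding disc_overlap_def by blast
qed

lemma disc_overlap_commute: "disc_overlap r c c' \<longleftrightarrow> disc_overlap r c' c"
  by (simp add: disc_overlap_iff_dist dist_commute)

lemma feasible_arrangement_dist:
  assumes "feasible_arrangement r n c" "i < n" "j < n" "i \<noteq> j"
  shows "2 * r \<le> dist (c i) (c j)"
  using assms by (auto simp: feasible_arrangement_def disc_overlap_iff_dist not_less)

lemma Inl_in_dep_vertices [simp]: "Inl i \<in> dep_vertices n \<longleftrightarrow> i < n"
  and Inr_in_dep_vertices [simp]: "Inr j \<in> dep_vertices n \<longleftrightarrow> j < n"
  by (auto simp: dep_vertices_def)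

lemma dep_edge_Inl_iff: "dep_edge r s g (Inl i) w \<longleftrightarrow> (\<exists>j. w = Inr j \<and> disc_overlap r (s i) (g j))"
  by (cases w) auto

lemma dep_edge_Inr_iff: "dep_edge r s g (Inr j) w \<longleftrightarrow> (\<exists>i. w = Inl i \<and> disc_overlap r (g j) (s i))"
  by (cases w) (auto simp: disc_overlap_commute)

lemma closed_segments_disjoint:
  fixes a b a' b' :: "'a::euclidean_space"
  assumes "d \<le> dist a a'" "d \<le> dist b b'" "dist a b < d" "dist a' b' < d"
  shows "closed_segment a b \<inter> closed_segment a' b' = {}"
proof (rule ccontr)
  assume "closed_segment a b \<inter> closed_segment a' b' \<noteq> {}"
  then obtain x where "x \<in> closed_segment a b" "x \<in> closed_segment a' b'"
    by blast
  then have "dist a b = dist a x + dist x b" "dist a' b' = dist a' x + dist x b'"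
    by (simp_all add: between between_mem_segment[symmetric])
  moreover have "dist a a' \<le> dist a x + dist x a'" "dist b b' \<le> dist b x + dist x b'"
    by (rule dist_triangle)+
  ultimately show False
    using assms by (simp add: dist_commute[of a' x] dist_commute[of x b])
qed

lemma dist_on_common_ray:
  fixes a b b' :: "'a::real_normed_vector"
  assumes "0 < v" "v \<le> u" "u *\<^sub>R (b - a) = v *\<^sub>R (b' - a)"
  shows "dist b b' \<le> dist a b'"
proof -
  have "u *\<^sub>R (b - b') = (u - v) *\<^sub>R (a - b')"
    using assms(3) by (simp add: algebra_simps)
  then have "norm (u *\<^sub>R (b - b')) = norm ((u - v) *\<^sub>R (a - b'))"
    by simp
  then have "u * dist b b' = (u - v) * dist a b'"
    using assms(1,2) by (simp add: dist_norm)
  also have "\<dots> \<le> u * dist a b'"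
    using assms(1) by (simp add: mult_right_mono)
  finally show ?thesis
    using assms(1,2) by simp
qed

lemma closed_segments_common_start:
  fixes a b b' :: "'a::real_normed_vector"
  assumes "d \<le> dist b b'" "dist a b < d" "dist a b' < d"
  shows "closed_segment a b \<inter> closed_segment a b' \<subseteq> {a}"
proof
  fix x assume x: "x \<in> closed_segment a b \<inter> closed_segment a b'"
  obtain u where u: "0 \<le> u" "x = (1 - u) *\<^sub>R a + u *\<^sub>R b"
    using x in_segment(1)[of x a b] by blast
  obtain v where v: "0 \<le> v" "x = (1 - v) *\<^sub>R a + v *\<^sub>R b'"
    using x in_segment(1)[of x a b'] by blast
  have eq: "u *\<^sub>R (b - a) = v *\<^sub>R (b' - a)"
    using u(2) v(2) by (simp add: algebra_simps)
  show "x \<in> {a}"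
  proof (rule ccontr)
    assume "x \<notin> {a}"
    then have "u \<noteq> 0" "v \<noteq> 0"
      using u(2) v(2) by auto
    then have "0 < u" "0 < v"
      using u(1) v(1) by linarith+
    then have "dist b b' \<le> dist a b' \<or> dist b' b \<le> dist a b"
      using dist_on_common_ray[of v u b a b'] dist_on_common_ray[of u v b' a b] eq
      by (cases "v \<le> u") auto
    then show False
      using assms dist_commute[of b' b] by linarith
  qed
qed

lemma planar_graph_straight_line:
  fixes p :: "'v \<Rightarrow> point"
  assumes "inj_on p V"
    and "\<And>u v. u \<in> V \<Longrightarrow> v \<in> V \<Longrightarrow> E u v \<Longrightarrow>
           u \<noteq> v \<and> closed_segment (p u) (p v) \<inter> p ` V \<subseteq> {p u, p v}"
    and "\<And>u v u' v'. u \<in> V \<Longrightarrow> v \<in> V \<Longrightarrow> u' \<in> V \<Longrightarrow> v' \<in> V \<Longrightarrow>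
           E u v \<Longrightarrow> E u' v' \<Longrightarrow> {u, v} \<noteq> {u', v'} \<Longrightarrow>
           closed_segment (p u) (p v) \<inter> closed_segment (p u') (p v') \<subseteq> p ` ({u, v} \<inter> {u', v'})"
  shows "planar_graph V E"
  unfolding planar_graph_def
proof (intro exI[of _ p] exI[of _ "\<lambda>u v. linepath (p u) (p v)"] conjI ballI impI)
  fix u v assume uv: "u \<in> V" "v \<in> V" "E u v"
  then have "p u \<noteq> p v"
    using assms(1,2) by (meson inj_onD)
  then show "arc (linepath (p u) (p v))"
    by (rule arc_linepath)
  show "path_image (linepath (p u) (p v)) \<inter> p ` V = {p u, p v}"
    using assms(2)[OF uv] uv by auto
qed (use assms(1,3) in auto)

context
  fixes n :: nat and d :: real and s h :: "nat \<Rightarrow> point"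
  assumes sep_s: "\<And>i k. i < n \<Longrightarrow> k < n \<Longrightarrow> i \<noteq> k \<Longrightarrow> d \<le> dist (s i) (s k)"
    and sep_h: "\<And>j l. j < n \<Longrightarrow> l < n \<Longrightarrow> j \<noteq> l \<Longrightarrow> d \<le> dist (h j) (h l)"
begin

lemma short_segment_avoids_other_vertices:
  assumes "i < n" "j < n" "dist (s i) (h j) < d"
  shows "closed_segment (s i) (h j) \<inter> case_sum s h ` dep_vertices n \<subseteq> {s i, h j}"
proof
  fix x assume x: "x \<in> closed_segment (s i) (h j) \<inter> case_sum s h ` dep_vertices n"
  then have near: "dist x (s i) < d" "dist x (h j) < d"
    using dist_in_closed_segment[of x "s i" "h j"] assms(3) by auto
  from x obtain w where w: "w \<in> dep_vertices n" "x = case_sum s h w"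
    by blast
  show "x \<in> {s i, h j}"
  proof (cases w)
    case (Inl k)
    with w have "k < n" "x = s k"
      by simp_all
    then have "k = i"
      using sep_s[of k i] near(1) assms(1) by (cases "k = i") auto
    then show ?thesis
      using \<open>x = s k\<close> by simp
  next
    case (Inr l)
    with w have "l < n" "x = h l"
      by simp_all
    then have "l = j"
      using sep_h[of l j] near(2) assms(2) by (cases "l = j") auto
    then show ?thesis
      using \<open>x = h l\<close> by simp
  qed
qed

lemma short_segments_meet_at_common_vertex:
  assumes ij: "i < n" "j < n" "dist (s i) (h j) < d"
    and kl: "k < n" "l < n" "dist (s k) (h l) < d"
    and "{Inl i, Inr j} \<noteq> ({Inl k, Inr l} :: (nat + nat) set)"
  shows "closed_segment (s i) (h j) \<inter> closed_segment (s k) (h l)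
         \<subseteq> case_sum s h ` ({Inl i, Inr j} \<inter> {Inl k, Inr l})"
proof -
  consider "i = k" "j \<noteq> l" | "i \<noteq> k" "j = l" | "i \<noteq> k" "j \<noteq> l"
    using assms(7) by blast
  then show ?thesis
  proof cases
    case 1
    have "closed_segment (s i) (h j) \<inter> closed_segment (s i) (h l) \<subseteq> {s i}"
      by (rule closed_segments_common_start[of d]) (use sep_h ij kl 1 in simp_all)
    moreover have "{Inl i, Inr j} \<inter> {Inl k, Inr l} = {Inl i :: nat + nat}"
      using 1 by auto
    ultimately show ?thesis
      using 1 by simp
  next
    case 2
    have "closed_segment (h j) (s i) \<inter> closed_segment (h j) (s k) \<subseteq> {h j}"
      by (rule closed_segments_common_start[of d]) (use sep_s ij kl 2 in \<open>simp_all add: dist_commute\<close>)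
    moreover have "{Inl i, Inr j} \<inter> {Inl k, Inr l} = {Inr j :: nat + nat}"
      using 2 by auto
    ultimately show ?thesis
      using 2 by (simp add: closed_segment_commute)
  next
    case 3
    have "closed_segment (s i) (h j) \<inter> closed_segment (s k) (h l) = {}"
      by (rule closed_segments_disjoint[of d]) (use sep_s sep_h ij kl 3 in simp_all)
    then show ?thesis
      by simp
  qed
qed

lemma planar_graph_bipartite_short_edges:
  fixes E :: "nat + nat \<Rightarrow> nat + nat \<Rightarrow> bool"
  assumes "d > 0"
    and distinct: "\<And>i j. i < n \<Longrightarrow> j < n \<Longrightarrow> s i \<noteq> h j"
    and short: "\<And>u v. u \<in> dep_vertices n \<Longrightarrow> v \<in> dep_vertices n \<Longrightarrow> E u v \<Longrightarrow>
                  \<exists>i j. {u, v} = {Inl i, Inr j} \<and> dist (s i) (h j) < d"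
  shows "planar_graph (dep_vertices n) E"
proof -
  define p where "p = case_sum s h"
  have edge: "\<exists>i j. i < n \<and> j < n \<and> {u, v} = {Inl i, Inr j} \<and> dist (s i) (h j) < d \<and>
      closed_segment (p u) (p v) = closed_segment (s i) (h j) \<and> {p u, p v} = {s i, h j}"
    if uv: "u \<in> dep_vertices n" "v \<in> dep_vertices n" "E u v" for u v
  proof -
    obtain i j where ij: "{u, v} = {Inl i, Inr j}" "dist (s i) (h j) < d"
      using short[OF uv] by blast
    then consider "u = Inl i" "v = Inr j" | "u = Inr j" "v = Inl i"
      by (auto simp: doubleton_eq_iff)
    then have "i < n \<and> j < n \<and> closed_segment (p u) (p v) = closed_segment (s i) (h j) \<and>
        {p u, p v} = {s i, h j}"
      by cases (use uv in \<open>auto simp: p_def closed_segment_commute\<close>)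
    then show ?thesis
      using ij by blast
  qed
  show ?thesis
  proof (rule planar_graph_straight_line[of p])
    have "i = k" if "i < n" "k < n" "s i = s k" for i k
      using sep_s[OF that(1,2)] that(3) \<open>d > 0\<close> by (cases "i = k") auto
    moreover have "j = l" if "j < n" "l < n" "h j = h l" for j l
      using sep_h[OF that(1,2)] that(3) \<open>d > 0\<close> by (cases "j = l") auto
    ultimately show "inj_on p (dep_vertices n)"
      using distinct distinct[THEN not_sym] by (auto simp: inj_on_def p_def dep_vertices_def)
  next
    fix u v assume "u \<in> dep_vertices n" "v \<in> dep_vertices n" "E u v"
    then obtain i j where ij: "i < n" "j < n" "{u, v} = {Inl i, Inr j}" "dist (s i) (h j) < d"
      and seg: "closed_segment (p u) (p v) = closed_segment (s i) (h j)"
      and ends: "{p u, p v} = {s i, h j}"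
      using edge by blast
    have "u \<noteq> v"
      using ij(3) by (auto simp: doubleton_eq_iff)
    then show "u \<noteq> v \<and> closed_segment (p u) (p v) \<inter> p ` dep_vertices n \<subseteq> {p u, p v}"
      unfolding seg ends
      using short_segment_avoids_other_vertices[OF ij(1,2,4), folded p_def] by blast
  next
    fix u v u' v'
    assume V: "u \<in> dep_vertices n" "v \<in> dep_vertices n" "u' \<in> dep_vertices n" "v' \<in> dep_vertices n"
      and E: "E u v" "E u' v'" and ne: "{u, v} \<noteq> {u', v'}"
    obtain i j where ij: "i < n" "j < n" "{u, v} = {Inl i, Inr j}" "dist (s i) (h j) < d"
      and seg: "closed_segment (p u) (p v) = closed_segment (s i) (h j)"
      using edge[OF V(1,2) E(1)] by blast
    obtain k l where kl: "k < n" "l < n" "{u', v'} = {Inl k, Inr l}" "dist (s k) (h l) < d"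
      and seg': "closed_segment (p u') (p v') = closed_segment (s k) (h l)"
      using edge[OF V(3,4) E(2)] by blast
    show "closed_segment (p u) (p v) \<inter> closed_segment (p u') (p v') \<subseteq> p ` ({u, v} \<inter> {u', v'})"
      unfolding seg seg' ij(3) kl(3)
      using short_segments_meet_at_common_vertex[OF ij(1,2,4) kl(1,2,4), folded p_def] ne ij(3) kl(3)
      by simp
  qed
qed

end

lemma translation_avoiding_and_keeping_close:
  fixes a b :: "nat \<Rightarrow> 'a::euclidean_space"
  obtains t where "\<And>i j. i < n \<Longrightarrow> j < n \<Longrightarrow> a i \<noteq> b j + t"
    and "\<And>i j. i < n \<Longrightarrow> j < n \<Longrightarrow> dist (a i) (b j) < e \<Longrightarrow> dist (a i) (b j + t) < e"
proof -
  have "\<forall>\<^sub>F t in at 0. a i \<noteq> b j + t \<and> (dist (a i) (b j) < e \<longrightarrow> dist (a i) (b j + t) < e)"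
    for i j
  proof (rule eventually_conj)
    show "\<forall>\<^sub>F t in at 0. a i \<noteq> b j + t"
      using eventually_neq_at_within[of "a i - b j" 0 UNIV] by (auto elim: eventually_mono)
    have "((\<lambda>t. dist (a i) (b j + t)) \<longlongrightarrow> dist (a i) (b j + 0)) (at 0)"
      by (intro tendsto_intros)
    then show "\<forall>\<^sub>F t in at 0. dist (a i) (b j) < e \<longrightarrow> dist (a i) (b j + t) < e"
      by (cases "dist (a i) (b j) < e") (auto simp: order_tendstoD(2))
  qed
  then have "\<forall>\<^sub>F t in at 0. \<forall>(i, j) \<in> {..<n} \<times> {..<n}.
      a i \<noteq> b j + t \<and> (dist (a i) (b j) < e \<longrightarrow> dist (a i) (b j + t) < e)"
    by (intro eventually_ball_finite) auto
  then show ?thesis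
    using that eventually_happens'[OF at_neq_bot] by fastforce
qed

lemma dep_graph_planar:
  assumes "r > 0" "feasible_arrangement r n s" "feasible_arrangement r n g"
  shows "planar_graph (dep_vertices n) (dep_edge r s g)"
proof -
  obtain t where t: "\<And>i j. i < n \<Longrightarrow> j < n \<Longrightarrow> s i \<noteq> g j + t"
    "\<And>i j. i < n \<Longrightarrow> j < n \<Longrightarrow> dist (s i) (g j) < 2 * r \<Longrightarrow> dist (s i) (g j + t) < 2 * r"
    using translation_avoiding_and_keeping_close[where a = s and b = g and n = n and e = "2 * r"]
    by blast
  show ?thesis
  proof (rule planar_graph_bipartite_short_edges[where h = "\<lambda>j. g j + t" and d = "2 * r"])
    fix u v assume "u \<in> dep_vertices n" "v \<in> dep_vertices n" "dep_edge r s g u v"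
    then show "\<exists>i j. {u, v} = {Inl i, Inr j} \<and> dist (s i) (g j + t) < 2 * r"
      using t(2) by (cases u; cases v) (auto simp: dep_vertices_def disc_overlap_iff_dist insert_commute)
  qed (use assms t(1) feasible_arrangement_dist in auto)
qed

lemma cos_gt_half: "\<bar>x\<bar> < pi / 3 \<Longrightarrow> 1 / 2 < cos x"
  using cos_monotone_0_pi[of "\<bar>x\<bar>" "pi / 3"] by (simp add: cos_60)

lemma cos_lt_half_bounds:
  assumes "0 \<le> x" "x < 2 * pi" "cos x < 1 / 2"
  shows "pi / 3 < x \<and> x < 5 * pi / 3"
proof (rule ccontr)
  assume "\<not> ?thesis"
  then consider "x \<le> pi / 3" | "5 * pi / 3 \<le> x"
    by linarith
  then have "cos (pi / 3) \<le> cos x"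
  proof cases
    case 1
    then show ?thesis
      using assms(1) by (intro cos_monotone_0_pi_le) auto
  next
    case 2
    then have "cos (pi / 3) \<le> cos (2 * pi - x)"
      using assms(2) by (intro cos_monotone_0_pi_le) auto
    then show ?thesis
      by (simp add: cos_diff)
  qed
  then show False
    using assms(3) by (simp add: cos_60)
qed

lemma cos_diff_2pi_int: "cos (x - 2 * pi * of_int m) = cos x"
  by (simp add: cos_diff)

lemma card_le_4_if_separated_in_interval:
  fixes \<phi> :: "'a \<Rightarrow> real"
  assumes "\<delta> > 0"
    and inside: "\<And>j. j \<in> K \<Longrightarrow> \<delta> < \<phi> j \<and> \<phi> j < 5 * \<delta>"
    and apart: "\<And>a b. a \<in> K \<Longrightarrow> b \<in> K \<Longrightarrow> a \<noteq> b \<Longrightarrow> \<delta> \<le> \<bar>\<phi> a - \<phi> b\<bar>"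
  shows "finite K \<and> card K \<le> 4"
proof -
  define sector where "sector j = \<lfloor>\<phi> j / \<delta>\<rfloor>" for j
  have "sector ` K \<subseteq> {1..4}"
  proof
    fix y assume "y \<in> sector ` K"
    then obtain j where "j \<in> K" "y = sector j"
      by blast
    moreover have "1 < \<phi> j / \<delta>" "\<phi> j / \<delta> < 5"
      using inside[OF calculation(1)] \<open>\<delta> > 0\<close> by (simp_all add: field_simps)
    ultimately show "y \<in> {1..4}"
      unfolding sector_def by (simp add: le_floor_iff floor_le_iff)
  qed
  moreover have "inj_on sector K"
  proof (rule inj_onI, rule ccontr)
    fix a b assume ab: "a \<in> K" "b \<in> K" "sector a = sector b" "a \<noteq> b"
    then have "\<bar>\<phi> a / \<delta> - \<phi> b / \<delta>\<bar> < 1"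
      unfolding sector_def by (simp add: floor_eq_iff[symmetric] abs_less_iff) linarith
    then have "\<bar>\<phi> a - \<phi> b\<bar> < \<delta>"
      using \<open>\<delta> > 0\<close> unfolding abs_less_iff by (simp add: field_simps)
    then show False
      using apart[OF ab(1,2,4)] by simp
  qed
  ultimately show ?thesis
    using inj_on_finite[of sector K "{1..4}"] card_inj_on_le[of sector K "{1..4}"] by simp
qed

lemma card_le_5_if_cos_diff_lt_half:
  fixes \<theta> :: "'a \<Rightarrow> real"
  assumes far: "\<And>a b. a \<in> J \<Longrightarrow> b \<in> J \<Longrightarrow> a \<noteq> b \<Longrightarrow> cos (\<theta> a - \<theta> b) < 1 / 2"
  shows "card J \<le> 5"
proof (cases "J = {}")
  case False
  then obtain j0 where j0: "j0 \<in> J"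
    by blast
  \<comment> \<open>Measured from j0 and reduced mod 2pi, every other angle lies in (pi/3, 5pi/3).\<close>
  define k where "k j = \<lfloor>(\<theta> j - \<theta> j0) / (2 * pi)\<rfloor>" for j
  define \<phi> where "\<phi> j = \<theta> j - \<theta> j0 - 2 * pi * of_int (k j)" for j
  have \<phi>_range: "0 \<le> \<phi> j \<and> \<phi> j < 2 * pi" for j
  proof -
    have "of_int (k j) \<le> (\<theta> j - \<theta> j0) / (2 * pi)" "(\<theta> j - \<theta> j0) / (2 * pi) < of_int (k j) + 1"
      unfolding k_def by linarith+
    then show ?thesis
      unfolding \<phi>_def by (simp add: field_simps)
  qed
  have cos_\<phi>: "cos (\<phi> a - \<phi> b) = cos (\<theta> a - \<theta> b)" for a b
  proof -
    have "\<phi> a - \<phi> b = \<theta> a - \<theta> b - 2 * pi * of_int (k a - k b)"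
      unfolding \<phi>_def by (simp add: algebra_simps)
    then show ?thesis
      by (simp only: cos_diff_2pi_int)
  qed
  have "\<phi> j0 = 0"
    by (simp add: \<phi>_def k_def)
  have "finite (J - {j0}) \<and> card (J - {j0}) \<le> 4"
  proof (rule card_le_4_if_separated_in_interval[of "pi / 3"])
    fix j assume "j \<in> J - {j0}"
    then have "cos (\<phi> j) < 1 / 2"
      using far[of j j0] cos_\<phi>[of j j0] j0 \<open>\<phi> j0 = 0\<close> by simp
    then show "pi / 3 < \<phi> j \<and> \<phi> j < 5 * (pi / 3)"
      using cos_lt_half_bounds \<phi>_range by simp
  next
    fix a b assume "a \<in> J - {j0}" "b \<in> J - {j0}" "a \<noteq> b"
    then have "cos (\<phi> a - \<phi> b) < 1 / 2"
      using far[of a b] cos_\<phi>[of a b] by simp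
    then show "pi / 3 \<le> \<bar>\<phi> a - \<phi> b\<bar>"
      by (meson cos_gt_half not_le order.asym)
  qed simp
  then show ?thesis
    using j0 by (simp add: card_Diff_singleton) arith
qed simp

lemma vec2_polar:
  fixes v :: "real^2"
  obtains t where "v$1 = norm v * cos t" "v$2 = norm v * sin t"
proof (cases "v = 0")
  case False
  have "norm v ^ 2 = v \<bullet> v"
    by (rule power2_norm_eq_inner)
  also have "\<dots> = v$1 ^ 2 + v$2 ^ 2"
    by (simp add: inner_vec_def sum_2 power2_eq_square)
  finally have norm_sq: "norm v ^ 2 = v$1 ^ 2 + v$2 ^ 2" .
  have "(v$1 / norm v) ^ 2 + (v$2 / norm v) ^ 2 = (v$1 ^ 2 + v$2 ^ 2) / norm v ^ 2"
    by (simp add: power_divide add_divide_distrib)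
  also have "\<dots> = 1"
    using False by (simp only: norm_sq[symmetric]) simp
  finally obtain t where "v$1 / norm v = cos t" "v$2 / norm v = sin t"
    using sincos_total_2pi by metis
  then show ?thesis
    using that False by (simp add: field_simps)
qed (use that in simp)

lemma norm_diff_less_if_inner_ge:
  fixes u v :: "'a::real_inner"
  assumes "norm u < d" "norm v < d" "norm u * norm v \<le> 2 * (u \<bullet> v)"
  shows "norm (u - v) < d"
proof -
  have "norm u ^ 2 + norm v ^ 2 - norm u * norm v < d ^ 2"
  proof (cases "norm u \<le> norm v")
    case True
    then have "norm u ^ 2 \<le> norm u * norm v"
      by (simp add: power2_eq_square mult_left_mono)
    moreover have "norm v ^ 2 < d ^ 2"
      using assms(2) by (simp add: power_strict_mono)
    ultimately show ?thesis
      by linarith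
  next
    case False
    then have "norm v ^ 2 \<le> norm u * norm v"
      by (simp add: power2_eq_square mult_right_mono)
    moreover have "norm u ^ 2 < d ^ 2"
      using assms(1) by (simp add: power_strict_mono)
    ultimately show ?thesis
      by linarith
  qed
  moreover have "norm (u - v) ^ 2 = norm u ^ 2 + norm v ^ 2 - 2 * (u \<bullet> v)"
    by (simp add: power2_norm_eq_inner inner_diff inner_commute)
  ultimately have "norm (u - v) ^ 2 < d ^ 2"
    using assms(3) by linarith
  moreover have "0 \<le> d"
    using assms(1) norm_ge_zero[of u] by linarith
  ultimately show ?thesis
    by (rule power_less_imp_less_base)
qed

lemma card_separated_in_ball_le_5:
  fixes P :: "(real^2) set"
  assumes "P \<subseteq> ball c d" "\<And>p q. p \<in> P \<Longrightarrow> q \<in> P \<Longrightarrow> p \<noteq> q \<Longrightarrow> d \<le> dist p q"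
  shows "card P \<le> 5"
proof -
  \<comment> \<open>If c itself lies in P its angle is arbitrary, but then the inner product below vanishes.\<close>
  have "\<exists>t. (p - c)$1 = norm (p - c) * cos t \<and> (p - c)$2 = norm (p - c) * sin t" for p
    by (rule vec2_polar[of "p - c"]) blast
  then obtain \<theta> where \<theta>: "\<And>p. (p - c)$1 = norm (p - c) * cos (\<theta> p) \<and> (p - c)$2 = norm (p - c) * sin (\<theta> p)"
    by metis
  have "cos (\<theta> p - \<theta> q) < 1 / 2" if "p \<in> P" "q \<in> P" "p \<noteq> q" for p q
  proof (rule ccontr)
    assume "\<not> cos (\<theta> p - \<theta> q) < 1 / 2"
    moreover have "(p - c) \<bullet> (q - c) = norm (p - c) * norm (q - c) * cos (\<theta> p - \<theta> q)"
      using \<theta>[of p] \<theta>[of q] by (simp add: inner_vec_def sum_2 cos_diff algebra_simps)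
    ultimately have "norm (p - c) * norm (q - c) \<le> 2 * ((p - c) \<bullet> (q - c))"
      using mult_left_mono[of "1 / 2" "cos (\<theta> p - \<theta> q)" "norm (p - c) * norm (q - c)"] by simp
    moreover have "norm (p - c) < d" "norm (q - c) < d"
      using that(1,2) assms(1) by (auto simp: dist_norm norm_minus_commute)
    ultimately have "dist p q < d"
      using norm_diff_less_if_inner_ge[of "p - c" d "q - c"] by (simp add: dist_norm)
    then show False
      using assms(2)[OF that] by simp
  qed
  then show ?thesis
    by (rule card_le_5_if_cos_diff_lt_half)
qed

lemma card_overlapping_discs_le_5:
  assumes "feasible_arrangement r n c"
  shows "card {j. j < n \<and> disc_overlap r p (c j)} \<le> 5"
proof -
  let ?J = "{j. j < n \<and> disc_overlap r p (c j)}"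
  have sep: "2 * r \<le> dist (c i) (c j)" if "i \<in> ?J" "j \<in> ?J" "i \<noteq> j" for i j
    using feasible_arrangement_dist[OF assms] that by simp
  have "inj_on c ?J"
  proof (rule inj_onI)
    fix i j assume ij: "i \<in> ?J" "j \<in> ?J" "c i = c j"
    have "dist p (c i) < 2 * r"
      using ij(1) by (simp add: disc_overlap_iff_dist)
    then have "0 < r"
      using zero_le_dist[of p "c i"] by linarith
    then show "i = j"
      using sep[OF ij(1,2)] ij(3) by (cases "i = j") auto
  qed
  then have "card ?J = card (c ` ?J)"
    by (rule card_image[symmetric])
  also have "\<dots> \<le> 5"
  proof (rule card_separated_in_ball_le_5)
    show "c ` ?J \<subseteq> ball p (2 * r)"
      by (auto simp: disc_overlap_iff_dist)
    fix x y assume "x \<in> c ` ?J" "y \<in> c ` ?J" "x \<noteq> y"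
    then obtain i j where "i \<in> ?J" "j \<in> ?J" "i \<noteq> j" "x = c i" "y = c j"
      by blast
    then show "2 * r \<le> dist x y"
      using sep by simp
  qed
  finally show ?thesis .
qed

lemma dep_graph_max_degree_le_5:
  assumes "feasible_arrangement r n s" "feasible_arrangement r n g"
  shows "max_degree_le (dep_vertices n) (dep_edge r s g) 5"
  unfolding max_degree_le_def
proof
  fix v assume "v \<in> dep_vertices n"
  show "card {w \<in> dep_vertices n. dep_edge r s g v w} \<le> 5"
  proof (cases v)
    case (Inl i)
    then have "{w \<in> dep_vertices n. dep_edge r s g v w} = Inr ` {j. j < n \<and> disc_overlap r (s i) (g j)}"
      by (auto simp: dep_edge_Inl_iff)
    then have "card {w \<in> dep_vertices n. dep_edge r s g v w} \<le> card {j. j < n \<and> disc_overlap r (s i) (g j)}"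
      by (simp add: card_image_le)
    also have "\<dots> \<le> 5"
      using card_overlapping_discs_le_5[OF assms(2)] .
    finally show ?thesis .
  next
    case (Inr j)
    then have "{w \<in> dep_vertices n. dep_edge r s g v w} = Inl ` {i. i < n \<and> disc_overlap r (g j) (s i)}"
      by (auto simp: dep_edge_Inr_iff)
    then have "card {w \<in> dep_vertices n. dep_edge r s g v w} \<le> card {i. i < n \<and> disc_overlap r (g j) (s i)}"
      by (simp add: card_image_le)
    also have "\<dots> \<le> 5"
      using card_overlapping_discs_le_5[OF assms(1)] .
    finally show ?thesis .
  qed
qed

theorem proposition3:
  fixes n :: nat and r :: real and W :: "point set"
    and s g :: "nat \<Rightarrow> point"
  assumes "r > 0"
    and "bounded W"
    and "\<forall>i<n. cball (s i) r \<subseteq> W"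
    and "\<forall>i<n. cball (g i) r \<subseteq> W"
    and "feasible_arrangement r n s"
    and "feasible_arrangement r n g"
  shows "planar_graph (dep_vertices n) (dep_edge r s g) \<and>
         max_degree_le (dep_vertices n) (dep_edge r s g) 5"
  using dep_graph_planar[OF assms(1,5,6)] dep_graph_max_degree_le_5[OF assms(5,6)] by blast

end
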